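(* Let $m\le n$, let $\mathbf A\in\mathbb R^{m\times n}$ have columns in general position, i.e., any $m$ columns of $\mathbf A$ span $\mathbb R^m$, and let $\mathbf b\in\mathbb R^m$. Then every minimizer $\mathbf z^\star\in\arg\min_{\mathbf z\in\mathbb R^n}\|\mathbf z\|_\infty$ subject to $\mathbf A\mathbf z=\mathbf b$ satisfies $$\#\{i\in[n]:|z^\star_i|=\|\mathbf z^\star\|_\infty\}\ge n-m+1.$$ *)

theory Defs
  imports "HOL-Analysis.Analysis"
begin

end

theory Submission
  imports Defs
begin

text \<open>If fewer than \<open>n - m + 1\<close> coordinates of the minimiser \<open>z\<close> attain \<open>t = \<parallel>z\<parallel>\<^sub>\<infinity>\<close>,
  then at least \<open>m\<close> coordinates stay strictly below \<open>t\<close>, and by general position the columns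
  indexed by them span \<open>\<real>\<^sup>m\<close>. Hence the sign pattern \<open>s\<close> of the extremal coordinates can be
  written as \<open>A s = A w\<close> with \<open>w\<close> supported on non-extremal coordinates. Moving \<open>z\<close> a little
  in the kernel direction \<open>w - s\<close> keeps \<open>A z = b\<close>, shrinks every extremal coordinate and keeps
  the others below \<open>t\<close>, contradicting minimality.\<close>

lemma infnorm_attained_cart: "\<exists>i. \<bar>(x::real^'n) $ i\<bar> = infnorm x"
proof -
  have "{\<bar>x$i\<bar> |i. i \<in> UNIV} = range (\<lambda>i. \<bar>x$i\<bar>)"
    by auto
  moreover have "Sup (range (\<lambda>i. \<bar>x$i\<bar>)) \<in> range (\<lambda>i. \<bar>x$i\<bar>)"
    by (subst cSup_eq_Max) (auto intro!: Max_in)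
  ultimately show ?thesis
    unfolding infnorm_cart by auto
qed

lemma infnorm_less_cart:
  assumes "\<And>i. \<bar>(x::real^'n) $ i\<bar> < t"
  shows "infnorm x < t"
  using infnorm_attained_cart[of x] assms by metis

lemma in_span_columns_obtain_supported:
  fixes A :: "real^'n^'m"
  assumes "c \<in> span ((\<lambda>j. column j A) ` S)"
  obtains w where "\<And>i. i \<notin> S \<Longrightarrow> w $ i = 0" and "A *v w = c"
proof -
  let ?W = "{w :: real^'n. \<forall>i. i \<notin> S \<longrightarrow> w $ i = 0}"
  have "subspace ?W"
    by (auto simp: subspace_def)
  then have "subspace ((*v) A ` ?W)"
    by (rule linear_subspace_image[OF matrix_vector_mul_linear])
  moreover have "(\<lambda>j. column j A) ` S \<subseteq> (*v) A ` ?W"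
    by (auto simp: matrix_vector_mult_basis[symmetric] axis_def intro!: imageI)
  ultimately have "span ((\<lambda>j. column j A) ` S) \<subseteq> (*v) A ` ?W"
    by (rule span_minimal[rotated])
  with assms that show ?thesis
    by blast
qed

lemma infnorm_decreases_along_sign:
  fixes x d :: "real^'n"
  assumes pos: "infnorm x > 0"
    and sign: "\<And>i. \<bar>x $ i\<bar> = infnorm x \<Longrightarrow> d $ i = sgn (x $ i)"
  obtains \<epsilon> where "\<epsilon> > 0" and "infnorm (x - \<epsilon> *\<^sub>R d) < infnorm x"
proof -
  let ?t = "infnorm x"
  have "\<forall>\<^sub>F \<epsilon> in at_right 0. \<bar>x $ i - \<epsilon> * d $ i\<bar> < ?t" for i
  proof (cases "\<bar>x $ i\<bar> = ?t")
    case True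
    then have "x $ i - \<epsilon> * d $ i = sgn (x $ i) * (?t - \<epsilon>)" for \<epsilon>
      using sign[OF True] by (auto simp: sgn_if algebra_simps)
    then have "\<bar>x $ i - \<epsilon> * d $ i\<bar> < ?t" if "\<epsilon> \<in> {0<..<2 * ?t}" for \<epsilon>
      using that True pos by (auto simp: abs_mult sgn_if)
    moreover have "\<forall>\<^sub>F \<epsilon> in at_right 0. \<epsilon> \<in> {0<..<2 * ?t}"
      using pos by (intro eventually_at_right_real) simp
    ultimately show ?thesis
      by (auto elim: eventually_mono)
  next
    case False
    then have "\<bar>x $ i\<bar> < ?t"
      using component_le_infnorm_cart[of x i] by linarith
    moreover have "((\<lambda>\<epsilon>. \<bar>x $ i - \<epsilon> * d $ i\<bar>) \<longlongrightarrow> \<bar>x $ i\<bar>) (at_right 0)"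
      by (auto intro!: tendsto_eq_intros)
    ultimately show ?thesis
      by (rule order_tendstoD(2)[rotated])
  qed
  then have "\<forall>\<^sub>F \<epsilon> in at_right 0. \<epsilon> > 0 \<and> (\<forall>i. \<bar>x $ i - \<epsilon> * d $ i\<bar> < ?t)"
    by (intro eventually_conj eventually_at_right_less eventually_all_finite) auto
  then obtain \<epsilon> where "\<epsilon> > 0" "\<And>i. \<bar>x $ i - \<epsilon> * d $ i\<bar> < ?t"
    using eventually_happens'[OF trivial_limit_at_right_real] by blast
  then show ?thesis
    using that infnorm_less_cart[of "x - \<epsilon> *\<^sub>R d"] by simp
qed

theorem lemmaA2:
  fixes A :: "real ^ 'n ^ 'm" and b :: "real ^ 'm" and zs :: "real ^ 'n"
  assumes mn: "CARD('m) \<le> CARD('n)"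
    and gen_pos: "\<And>S :: 'n set. card S = CARD('m) \<Longrightarrow> span ((\<lambda>j. column j A) ` S) = UNIV"
    and feas: "A *v zs = b"
    and opt: "\<And>z. A *v z = b \<Longrightarrow> infnorm zs \<le> infnorm z"
  shows "card {i. \<bar>zs $ i\<bar> = infnorm zs} \<ge> CARD('n) - CARD('m) + 1"
proof (rule ccontr)
  define T where "T = {i. \<bar>zs $ i\<bar> = infnorm zs}"
  assume "\<not> ?thesis"
  then have "CARD('m) \<le> card (- T)"
    using mn card_Diff_subset[of T UNIV] unfolding T_def Compl_eq_Diff_UNIV by simp
  then obtain S where S: "S \<subseteq> - T" "card S = CARD('m)"
    by (meson obtain_subset_with_card_n)
  moreover have "S \<noteq> {}"
    using S(2) by auto
  ultimately obtain i where "i \<notin> T"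
    by blast
  then have pos: "infnorm zs > 0"
    using component_le_infnorm_cart[of zs i] abs_ge_zero[of "zs $ i"] unfolding T_def by force
  define s :: "real^'n" where "s = (\<chi> i. if i \<in> T then sgn (zs $ i) else 0)"
  obtain w where w_S: "\<And>i. i \<notin> S \<Longrightarrow> w $ i = 0" and Aw: "A *v w = A *v s"
    using in_span_columns_obtain_supported gen_pos[OF S(2)] by blast
  have "\<And>i. \<bar>zs $ i\<bar> = infnorm zs \<Longrightarrow> (s - w) $ i = sgn (zs $ i)"
    using w_S S(1) unfolding s_def T_def by auto
  then obtain \<epsilon> where "infnorm (zs - \<epsilon> *\<^sub>R (s - w)) < infnorm zs"
    using infnorm_decreases_along_sign[OF pos] by blast
  moreover have "A *v (zs - \<epsilon> *\<^sub>R (s - w)) = b"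
    by (simp add: matrix_vector_mult_diff_distrib matrix_vector_mult_scaleR Aw feas)
  ultimately show False
    using opt by fastforce
qed

end
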